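(* Let $\mathbf A,\mathbf B$ be complete perfect DInFL-algebras and $h:\mathbf A\to\mathbf B$ a complete homomorphism. Define $h_+:J^\infty(\mathbf B)\to J^\infty(\mathbf A)$ by $h_+(b)=\bigwedge\{a\in A\mid b\leqslant h(a)\}$. Then: (i) $h_+$ is a DInFL-frame morphism from $\mathbf B_+$ to $\mathbf A_+$; (ii) if $h$ is injective then $h_+$ is surjective; (iii) if $h$ is surjective then $h_+$ is an order-embedding (with respect to the orders $\preccurlyeq$ of $\mathbf B_+$ and $\mathbf A_+$).
   Context: An InFL-algebra is $(A,\wedge,\vee,\cdot,1,\sim,-)$ with a lattice, a monoid, and $a\cdot b\leqslant c\iff a\leqslant -(b\cdot{\sim}c)\iff b\leqslant{\sim}(-c\cdot a)$; DInFL means distributive lattice reduct. Complete perfect: complete, every element the join of completely join-irreducibles ($J^\infty$) below it and meet of completely meet-irreducibles above it. A complete homomorphism preserves all operations and arbitrary joins and meets. $\kappa(j)=\bigvee\{a\mid j\not\leqslant a\}$. For a complete perfect DInFL-algebra $\mathbf A$, $\mathbf A_+=(J^\infty(\mathbf A),I_1,\preccurlyeq,\circ,{}^\sim,{}^-)$ with $I_1=\{i\in J^\infty(\mathbf A)\mid i\leqslant 1\}$, $a\preccurlyeq b$ iff $b\leqslant a$, $c\in a\circ b$ iff $c\leqslant a\cdot b$, $a^\sim={\sim}\kappa(a)$, $a^-=-\kappa(a)$. A DInFL-frame morphism between structures $(W_1,I_1,\preccurlyeq_1,\circ_1,{}^{\sim_1},{}^{-_1})$ and $(W_2,I_2,\preccurlyeq_2,\circ_2,{}^{\sim_2},{}^{-_2})$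 (with $\circ_i:W_i\times W_i\to\mathcal P(W_i)$) is a function $f:W_1\to W_2$ such that for all $x,y,z\in W_1$, $u,v\in W_2$: (M1) $x\preccurlyeq_1 y$ implies $f(x)\preccurlyeq_2 f(y)$; (M2) $z\in x\circ_1 y$ implies $f(z)\in f(x)\circ_2 f(y)$; (M3) if $f(z)\in u\circ_2 v$ then there exist $x,y\in W_1$ with $u\preccurlyeq_2 f(x)$, $v\preccurlyeq_2 f(y)$, $z\in x\circ_1 y$; (M4) $f(x^{\sim_1})=f(x)^{\sim_2}$; (M5) $f(x^{-_1})=f(x)^{-_2}$; (M6) $I_1=f^{-1}[I_2]$. *)

theory Defs
  imports Main
begin

text \<open>The non-lattice operations of an InFL-algebra whose lattice reduct is the
  (complete) lattice given by the type class of the carrier type.\<close>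
record 'a infl_ops =
  mult :: "'a \<Rightarrow> 'a \<Rightarrow> 'a"
  one  :: 'a
  sim  :: "'a \<Rightarrow> 'a"
  mns  :: "'a \<Rightarrow> 'a"

definition InFL :: "('a::lattice) infl_ops \<Rightarrow> bool" where
  "InFL A \<longleftrightarrow>
     (\<forall>a b c. mult A (mult A a b) c = mult A a (mult A b c)) \<and>
     (\<forall>a. mult A (one A) a = a \<and> mult A a (one A) = a) \<and>
     (\<forall>a b c. (mult A a b \<le> c \<longleftrightarrow> a \<le> mns A (mult A b (sim A c))) \<and>
              (mult A a b \<le> c \<longleftrightarrow> b \<le> sim A (mult A (mns A c) a)))"

definition DInFL :: "('a::lattice) infl_ops \<Rightarrow> bool" where
  "DInFL A \<longleftrightarrow> InFL A \<and> (\<forall>x y z::'a. inf x (sup y z) = sup (inf x y) (inf x z))"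

definition cji :: "'a::complete_lattice \<Rightarrow> bool" where
  "cji j \<longleftrightarrow> (\<forall>S. j = Sup S \<longrightarrow> j \<in> S)"

definition cmi :: "'a::complete_lattice \<Rightarrow> bool" where
  "cmi m \<longleftrightarrow> (\<forall>S. m = Inf S \<longrightarrow> m \<in> S)"

definition Jinf :: "'a::complete_lattice set" where
  "Jinf = {j. cji j}"

definition Minf :: "'a::complete_lattice set" where
  "Minf = {m. cmi m}"

definition perfect :: "'a::complete_lattice itself \<Rightarrow> bool" where
  "perfect _ \<longleftrightarrow> (\<forall>a::'a. a = Sup {j \<in> Jinf. j \<le> a} \<and> a = Inf {m \<in> Minf. a \<le> m})"

text \<open>Complete perfect DInFL-algebra (completeness is given by the type class).\<close>
definition cp_DInFL :: "('a::complete_lattice) infl_ops \<Rightarrow> bool" where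
  "cp_DInFL A \<longleftrightarrow> DInFL A \<and> perfect TYPE('a)"

definition complete_hom ::
  "('a::complete_lattice) infl_ops \<Rightarrow> ('b::complete_lattice) infl_ops \<Rightarrow> ('a \<Rightarrow> 'b) \<Rightarrow> bool" where
  "complete_hom A B h \<longleftrightarrow>
     (\<forall>x y. h (mult A x y) = mult B (h x) (h y)) \<and> h (one A) = one B \<and>
     (\<forall>x. h (sim A x) = sim B (h x)) \<and> (\<forall>x. h (mns A x) = mns B (h x)) \<and>
     (\<forall>x y. h (inf x y) = inf (h x) (h y)) \<and> (\<forall>x y. h (sup x y) = sup (h x) (h y)) \<and>
     (\<forall>S. h (Sup S) = Sup (h ` S)) \<and> (\<forall>S. h (Inf S) = Inf (h ` S))"

definition kappa :: "'a::complete_lattice \<Rightarrow> 'a" where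
  "kappa j = Sup {a. \<not> j \<le> a}"

definition frm_I :: "('a::complete_lattice) infl_ops \<Rightarrow> 'a set" where
  "frm_I A = {i \<in> Jinf. i \<le> one A}"

definition frm_le :: "'a::complete_lattice \<Rightarrow> 'a \<Rightarrow> bool" where
  "frm_le a b \<longleftrightarrow> b \<le> a"

definition frm_circ :: "('a::complete_lattice) infl_ops \<Rightarrow> 'a \<Rightarrow> 'a \<Rightarrow> 'a set" where
  "frm_circ A a b = {c \<in> Jinf. c \<le> mult A a b}"

definition frm_sim :: "('a::complete_lattice) infl_ops \<Rightarrow> 'a \<Rightarrow> 'a" where
  "frm_sim A a = sim A (kappa a)"

definition frm_mns :: "('a::complete_lattice) infl_ops \<Rightarrow> 'a \<Rightarrow> 'a" where
  "frm_mns A a = mns A (kappa a)"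

definition frame_morphism ::
  "'a set \<Rightarrow> 'a set \<Rightarrow> ('a \<Rightarrow> 'a \<Rightarrow> bool) \<Rightarrow> ('a \<Rightarrow> 'a \<Rightarrow> 'a set) \<Rightarrow> ('a \<Rightarrow> 'a) \<Rightarrow> ('a \<Rightarrow> 'a) \<Rightarrow>
   'b set \<Rightarrow> 'b set \<Rightarrow> ('b \<Rightarrow> 'b \<Rightarrow> bool) \<Rightarrow> ('b \<Rightarrow> 'b \<Rightarrow> 'b set) \<Rightarrow> ('b \<Rightarrow> 'b) \<Rightarrow> ('b \<Rightarrow> 'b) \<Rightarrow>
   ('a \<Rightarrow> 'b) \<Rightarrow> bool" where
  "frame_morphism W1 I1 le1 c1 s1 m1 W2 I2 le2 c2 s2 m2 f \<longleftrightarrow>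
     f ` W1 \<subseteq> W2 \<and>
     (\<forall>x\<in>W1. \<forall>y\<in>W1. le1 x y \<longrightarrow> le2 (f x) (f y)) \<and>
     (\<forall>x\<in>W1. \<forall>y\<in>W1. \<forall>z\<in>W1. z \<in> c1 x y \<longrightarrow> f z \<in> c2 (f x) (f y)) \<and>
     (\<forall>z\<in>W1. \<forall>u\<in>W2. \<forall>v\<in>W2. f z \<in> c2 u v \<longrightarrow>
        (\<exists>x\<in>W1. \<exists>y\<in>W1. le2 u (f x) \<and> le2 v (f y) \<and> z \<in> c1 x y)) \<and>
     (\<forall>x\<in>W1. f (s1 x) = s2 (f x)) \<and>
     (\<forall>x\<in>W1. f (m1 x) = m2 (f x)) \<and>
     I1 = {x \<in> W1. f x \<in> I2}"

definition lower_adj :: "('a::complete_lattice \<Rightarrow> 'b::complete_lattice) \<Rightarrow> 'b \<Rightarrow> 'a" where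
  "lower_adj h b = Inf {a. b \<le> h a}"

end

theory Submission
  imports Defs
begin

(* h_+ is the lower adjoint of h: h_+ b <= a iff b <= h a.  In a complete perfect
  distributive lattice every completely join-irreducible j is completely join-prime, and
  kappa j is the largest element not above j.  Join-primeness turns b <= h a into a choice
  of join-irreducibles, which gives both the preservation of J^infinity and condition (M3);
  the characterisation of kappa, together with the Galois connection between ~ and -, moves
  the frame operations x^~ = ~kappa x and x^- = -kappa x across h_+. *)

lemma eq_if_same_upper_bounds: "(\<And>z. (x::'a::order) \<le> z \<longleftrightarrow> y \<le> z) \<Longrightarrow> x = y"
  by (meson order.antisym order.refl)

section \<open>Involutive residuated lattices\<close>

lemma InFL_residual_left: "InFL A \<Longrightarrow> mult A a b \<le> c \<longleftrightarrow> a \<le> mns A (mult A b (sim A c))"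
  unfolding InFL_def by blast

lemma InFL_residual_right: "InFL A \<Longrightarrow> mult A a b \<le> c \<longleftrightarrow> b \<le> sim A (mult A (mns A c) a)"
  unfolding InFL_def by blast

lemma InFL_one_left: "InFL A \<Longrightarrow> mult A (one A) a = a"
  unfolding InFL_def by blast

lemma InFL_one_right: "InFL A \<Longrightarrow> mult A a (one A) = a"
  unfolding InFL_def by blast

lemma InFL_sim_mns: "InFL A \<Longrightarrow> sim A (mns A c) = (c::'a::lattice)"
  using InFL_residual_right[of A "one A" _ c] InFL_one_left[of A] InFL_one_right[of A]
  by (metis order.antisym order.refl)

lemma InFL_mns_sim: "InFL A \<Longrightarrow> mns A (sim A c) = (c::'a::lattice)"
  using InFL_residual_left[of A _ "one A" c] InFL_one_left[of A] InFL_one_right[of A]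
  by (metis order.antisym order.refl)

lemma InFL_mult_mono:
  assumes "InFL A" "a \<le> a'" "b \<le> (b'::'a::lattice)"
  shows "mult A a b \<le> mult A a' b'"
proof -
  have "mult A a b \<le> mult A a' b"
    using InFL_residual_left[OF assms(1)] assms(2) by (meson order.refl order_trans)
  also have "\<dots> \<le> mult A a' b'"
    using InFL_residual_right[OF assms(1)] assms(3) by (meson order.refl order_trans)
  finally show ?thesis .
qed

lemma InFL_mult_Sup_left:
  assumes "InFL A"
  shows "mult A (Sup S) b = (SUP a\<in>S. mult A a (b::'a::complete_lattice))"
proof (rule order.antisym)
  have "mult A a b \<le> (SUP a\<in>S. mult A a b)" if "a \<in> S" for a
    using that by (rule SUP_upper)
  then show "mult A (Sup S) b \<le> (SUP a\<in>S. mult A a b)"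
    unfolding InFL_residual_left[OF assms] Sup_le_iff by blast
  show "(SUP a\<in>S. mult A a b) \<le> mult A (Sup S) b"
    by (rule SUP_least) (simp add: assms InFL_mult_mono Sup_upper)
qed

lemma InFL_mult_Sup_right:
  assumes "InFL A"
  shows "mult A a (Sup S) = (SUP b\<in>S. mult A (a::'a::complete_lattice) b)"
proof (rule order.antisym)
  have "mult A a b \<le> (SUP b\<in>S. mult A a b)" if "b \<in> S" for b
    using that by (rule SUP_upper)
  then show "mult A a (Sup S) \<le> (SUP b\<in>S. mult A a b)"
    unfolding InFL_residual_right[OF assms] Sup_le_iff by blast
  show "(SUP b\<in>S. mult A a b) \<le> mult A a (Sup S)"
    by (rule SUP_least) (simp add: assms InFL_mult_mono Sup_upper)
qed

lemma InFL_mns_antimono: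
  assumes "InFL A" "x \<le> (y::'a::lattice)"
  shows "mns A y \<le> mns A x"
proof -
  define d where "d = mns A (one A)"
  \<comment> \<open>since ~d = 1, residuation at d reads  a * b \<le> d \<longleftrightarrow> a \<le> -b\<close>
  have mns_eq: "mns A z = mns A (mult A z (sim A d))" for z
    using InFL_sim_mns[OF assms(1)] InFL_one_right[OF assms(1)] by (simp add: d_def)
  have "mult A (mns A y) x \<le> mult A (mns A y) y"
    using InFL_mult_mono[OF assms(1) order.refl assms(2)] .
  also have "\<dots> \<le> d"
    using InFL_residual_left[OF assms(1)] mns_eq by simp
  finally show ?thesis
    using InFL_residual_left[OF assms(1)] mns_eq by simp
qed

lemma InFL_sim_antimono:
  assumes "InFL A" "x \<le> (y::'a::lattice)"
  shows "sim A y \<le> sim A x"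
proof -
  define e where "e = sim A (one A)"
  have sim_eq: "sim A z = sim A (mult A (mns A e) z)" for z
    using InFL_mns_sim[OF assms(1)] InFL_one_left[OF assms(1)] by (simp add: e_def)
  have "mult A x (sim A y) \<le> mult A y (sim A y)"
    using InFL_mult_mono[OF assms(1) assms(2) order.refl] .
  also have "\<dots> \<le> e"
    using InFL_residual_right[OF assms(1)] sim_eq by simp
  finally show ?thesis
    using InFL_residual_right[OF assms(1)] sim_eq by simp
qed

lemma InFL_sim_le_iff: "InFL A \<Longrightarrow> sim A x \<le> y \<longleftrightarrow> mns A y \<le> (x::'a::lattice)"
  by (metis InFL_mns_antimono InFL_mns_sim InFL_sim_antimono InFL_sim_mns)

lemma InFL_mns_le_iff: "InFL A \<Longrightarrow> mns A x \<le> y \<longleftrightarrow> sim A y \<le> (x::'a::lattice)"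
  by (metis InFL_mns_antimono InFL_mns_sim InFL_sim_antimono InFL_sim_mns)

section \<open>Complete join-irreducibles in perfect distributive lattices\<close>

lemma Jinf_not_le_kappa:
  fixes j :: "'a::complete_lattice"
  assumes distrib: "\<And>x y z::'a. inf x (sup y z) = sup (inf x y) (inf x z)"
    and perfect: "perfect TYPE('a)" and j: "j \<in> Jinf"
  shows "\<not> j \<le> kappa j"
proof -
  define below where "below = Sup {x. x < j}"
  have "below \<noteq> j"
  proof
    assume "below = j"
    moreover have "\<forall>S. j = Sup S \<longrightarrow> j \<in> S"
      using j unfolding Jinf_def cji_def by simp
    ultimately have "j \<in> {x. x < j}"
      unfolding below_def by metis
    then show False by simp
  qed
  moreover have "below \<le> j"
    unfolding below_def by (auto intro: Sup_least)
  ultimately have "\<not> j \<le> below" by simp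
  moreover have "below = Inf {m \<in> Minf. below \<le> m}"
    using perfect unfolding perfect_def by blast
  ultimately obtain m where m: "m \<in> Minf" "below \<le> m" "\<not> j \<le> m"
    by (metis (no_types, lifting) Inf_greatest mem_Collect_eq)
  have "a \<le> m" if "\<not> j \<le> a" for a
  proof -
    have "inf j a < j"
      using that by (simp add: less_le_not_le)
    then have "inf j a \<le> below"
      unfolding below_def by (simp add: Sup_upper)
    then have "inf j a \<le> m"
      using m(2) by (rule order_trans)
    then have "m = sup m (inf j a)"
      by (simp add: sup.absorb1)
    also have "\<dots> = Inf {sup m j, sup m a}"
      using distrib_imp1[OF distrib] by simp
    finally have "m = sup m j \<or> m = sup m a"
      using m(1) unfolding Minf_def cmi_def by blast
    then show "a \<le> m"
      using m(3) by (metis sup_ge2)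
  qed
  then have "kappa j \<le> m"
    unfolding kappa_def by (auto intro: Sup_least)
  then show ?thesis
    using m(3) order_trans by blast
qed

lemma le_kappa_iff:
  fixes j :: "'a::complete_lattice"
  assumes "\<And>x y z::'a. inf x (sup y z) = sup (inf x y) (inf x z)"
    and "perfect TYPE('a)" and "j \<in> Jinf"
  shows "y \<le> kappa j \<longleftrightarrow> \<not> j \<le> y"
  using Jinf_not_le_kappa[OF assms] unfolding kappa_def
  by (metis (mono_tags, lifting) Sup_upper mem_Collect_eq order_trans)

lemma Jinf_le_SupD:
  fixes j :: "'a::complete_lattice"
  assumes "\<And>x y z::'a. inf x (sup y z) = sup (inf x y) (inf x z)"
    and "perfect TYPE('a)" and "j \<in> Jinf" and "j \<le> Sup S"
  obtains s where "s \<in> S" and "j \<le> s"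
  using assms(4) le_kappa_iff[OF assms(1-3)] by (meson Sup_least)

lemma Jinf_le_multD:
  fixes z :: "'a::complete_lattice"
  assumes "cp_DInFL A" and "z \<in> Jinf" and "z \<le> mult A p q"
  obtains x y where "x \<in> Jinf" "y \<in> Jinf" "x \<le> p" "y \<le> q" "z \<le> mult A x y"
proof -
  have infl: "InFL A" and distrib: "\<And>x y z::'a. inf x (sup y z) = sup (inf x y) (inf x z)"
    and perfect: "perfect TYPE('a)"
    using assms(1) unfolding cp_DInFL_def DInFL_def by blast+
  let ?X = "{x \<in> Jinf. x \<le> p}" and ?Y = "{y \<in> Jinf. y \<le> q}"
  have "mult A p q = mult A (Sup ?X) (Sup ?Y)"
    using perfect unfolding perfect_def by metis
  also have "\<dots> = (SUP x\<in>?X. SUP y\<in>?Y. mult A x y)"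
    by (subst InFL_mult_Sup_left[OF infl]) (simp only: InFL_mult_Sup_right[OF infl])
  finally have "z \<le> (SUP x\<in>?X. SUP y\<in>?Y. mult A x y)"
    using assms(3) by simp
  then obtain x where x: "x \<in> ?X" and "z \<le> (SUP y\<in>?Y. mult A x y)"
    using Jinf_le_SupD[OF distrib perfect assms(2)] by blast
  then obtain y where "y \<in> ?Y" and "z \<le> mult A x y"
    using Jinf_le_SupD[OF distrib perfect assms(2)] by blast
  then show ?thesis
    using x that by blast
qed

section \<open>Lower adjoints\<close>

context
  fixes h :: "'a::complete_lattice \<Rightarrow> 'b::complete_lattice"
  assumes h_Inf: "\<And>S. h (Inf S) = Inf (h ` S)"
begin

lemma Inf_preserving_mono: "x \<le> y \<Longrightarrow> h x \<le> h y"
  using h_Inf[of "{x, y}"] by (simp add: inf_absorb1 le_iff_inf)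

lemma le_lower_adj: "b \<le> h (lower_adj h b)"
  unfolding lower_adj_def h_Inf by (auto intro: INF_greatest)

lemma lower_adj_le_iff: "lower_adj h b \<le> a \<longleftrightarrow> b \<le> h a"
proof
  assume "lower_adj h b \<le> a"
  then show "b \<le> h a"
    using le_lower_adj Inf_preserving_mono order_trans by blast
next
  assume "b \<le> h a"
  then show "lower_adj h b \<le> a"
    unfolding lower_adj_def by (simp add: Inf_lower)
qed

lemma lower_adj_mono: "x \<le> y \<Longrightarrow> lower_adj h x \<le> lower_adj h y"
  by (meson le_lower_adj lower_adj_le_iff order_trans)

lemma lower_adj_Sup: "lower_adj h (Sup S) = (SUP b\<in>S. lower_adj h b)"
  by (rule eq_if_same_upper_bounds) (simp add: lower_adj_le_iff SUP_le_iff Sup_le_iff)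

lemma lower_adj_Jinf:
  assumes h_Sup: "\<And>S. h (Sup S) = Sup (h ` S)"
    and "\<And>x y z::'b. inf x (sup y z) = sup (inf x y) (inf x z)" and "perfect TYPE('b)"
    and "b \<in> Jinf"
  shows "lower_adj h b \<in> Jinf"
  unfolding Jinf_def cji_def
proof (intro CollectI allI impI)
  fix S
  assume S: "lower_adj h b = Sup S"
  have "b \<le> Sup (h ` S)"
    using le_lower_adj[of b] by (simp add: S h_Sup)
  then obtain s where "s \<in> S" and "b \<le> h s"
    using Jinf_le_SupD[OF assms(2-4)] by blast
  then have "lower_adj h b = s"
    using S by (metis lower_adj_le_iff Sup_upper order.antisym)
  then show "lower_adj h b \<in> S"
    using \<open>s \<in> S\<close> by simp
qed

lemma lower_adj_mult:
  assumes "InFL B" and h_mult: "\<And>x y. h (mult A x y) = mult B (h x) (h y)"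
    and "z \<le> mult B x y"
  shows "lower_adj h z \<le> mult A (lower_adj h x) (lower_adj h y)"
proof -
  have "z \<le> mult B (h (lower_adj h x)) (h (lower_adj h y))"
    using assms(3) InFL_mult_mono[OF assms(1) le_lower_adj le_lower_adj] by (rule order_trans)
  then show ?thesis
    by (simp add: lower_adj_le_iff h_mult)
qed

lemma lower_adj_kappa_negation:
  fixes negA negA' :: "'a \<Rightarrow> 'a" and negB negB' :: "'b \<Rightarrow> 'b"
  assumes h_Sup: "\<And>S. h (Sup S) = Sup (h ` S)"
    and distribA: "\<And>x y z::'a. inf x (sup y z) = sup (inf x y) (inf x z)"
    and perfectA: "perfect TYPE('a)"
    and distribB: "\<And>x y z::'b. inf x (sup y z) = sup (inf x y) (inf x z)"
    and perfectB: "perfect TYPE('b)"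
    and galA: "\<And>x y. negA' x \<le> y \<longleftrightarrow> negA y \<le> x"
    and galB: "\<And>x y. negB' x \<le> y \<longleftrightarrow> negB y \<le> x"
    and h_neg: "\<And>a. h (negA a) = negB (h a)"
    and b: "b \<in> Jinf"
  shows "lower_adj h (negB' (kappa b)) = negA' (kappa (lower_adj h b))"
proof (rule eq_if_same_upper_bounds)
  fix a
  have "lower_adj h (negB' (kappa b)) \<le> a \<longleftrightarrow> negB (h a) \<le> kappa b"
    by (simp add: lower_adj_le_iff galB)
  also have "\<dots> \<longleftrightarrow> \<not> lower_adj h b \<le> negA a"
    by (simp add: le_kappa_iff[OF distribB perfectB b] lower_adj_le_iff h_neg)
  also have "\<dots> \<longleftrightarrow> negA' (kappa (lower_adj h b)) \<le> a"
    using lower_adj_Jinf[OF h_Sup distribB perfectB b]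
    by (simp add: le_kappa_iff[OF distribA perfectA] galA)
  finally show "lower_adj h (negB' (kappa b)) \<le> a \<longleftrightarrow> negA' (kappa (lower_adj h b)) \<le> a" .
qed

lemma inj_imp_lower_adj_image_Jinf:
  assumes "inj h" and h_Sup: "\<And>S. h (Sup S) = Sup (h ` S)"
    and distrib: "\<And>x y z::'b. inf x (sup y z) = sup (inf x y) (inf x z)"
    and perfect: "perfect TYPE('b)"
  shows "lower_adj h ` Jinf = Jinf"
proof
  show "lower_adj h ` Jinf \<subseteq> Jinf"
    using lower_adj_Jinf[OF h_Sup distrib perfect] by blast
  show "Jinf \<subseteq> lower_adj h ` Jinf"
  proof
    fix a :: 'a
    assume a: "a \<in> Jinf"
    have "h (lower_adj h (h a)) = h a"
      using le_lower_adj Inf_preserving_mono lower_adj_le_iff by (meson order.antisym order.refl)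
    then have "a = lower_adj h (h a)"
      using \<open>inj h\<close> by (simp add: inj_eq)
    also have "\<dots> = lower_adj h (Sup {x \<in> Jinf. x \<le> h a})"
      using perfect unfolding perfect_def by metis
    finally have "a \<in> lower_adj h ` {x \<in> Jinf. x \<le> h a}"
      using a unfolding lower_adj_Sup Jinf_def cji_def by blast
    then show "a \<in> lower_adj h ` Jinf"
      by blast
  qed
qed

lemma surj_imp_lower_adj_le_iff:
  assumes "surj h"
  shows "lower_adj h x \<le> lower_adj h y \<longleftrightarrow> x \<le> y"
proof -
  have "h (lower_adj h y) = y"
    using \<open>surj h\<close> le_lower_adj Inf_preserving_mono lower_adj_le_iff
    by (metis order.antisym order.refl surjD)
  then show ?thesis
    by (simp add: lower_adj_le_iff)
qed

end

lemma complete_hom_lower_adj_frame_morphism: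
  fixes A :: "('a::complete_lattice) infl_ops" and B :: "('b::complete_lattice) infl_ops"
  assumes "cp_DInFL A" and "cp_DInFL B" and "complete_hom A B h"
  shows "frame_morphism (Jinf :: 'b set) (frm_I B) frm_le (frm_circ B) (frm_sim B) (frm_mns B)
                        (Jinf :: 'a set) (frm_I A) frm_le (frm_circ A) (frm_sim A) (frm_mns A)
                        (lower_adj h)"
proof -
  have infA: "InFL A" and distribA: "\<And>x y z::'a. inf x (sup y z) = sup (inf x y) (inf x z)"
    and perfectA: "perfect TYPE('a)"
    using assms(1) unfolding cp_DInFL_def DInFL_def by blast+
  have infB: "InFL B" and distribB: "\<And>x y z::'b. inf x (sup y z) = sup (inf x y) (inf x z)"
    and perfectB: "perfect TYPE('b)"
    using assms(2) unfolding cp_DInFL_def DInFL_def by blast+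
  have h_Inf: "\<And>S. h (Inf S) = Inf (h ` S)" and h_Sup: "\<And>S. h (Sup S) = Sup (h ` S)"
    and h_mult: "\<And>x y. h (mult A x y) = mult B (h x) (h y)" and h_one: "h (one A) = one B"
    and h_sim: "\<And>x. h (sim A x) = sim B (h x)" and h_mns: "\<And>x. h (mns A x) = mns B (h x)"
    using assms(3) unfolding complete_hom_def by blast+
  note Jinf_closed = lower_adj_Jinf[OF h_Inf h_Sup distribB perfectB]
  note adj = lower_adj_le_iff[OF h_Inf]
  have decompose: "\<exists>x\<in>Jinf. \<exists>y\<in>Jinf. frm_le u (lower_adj h x) \<and> frm_le v (lower_adj h y)
                 \<and> z \<in> frm_circ B x y"
    if z: "z \<in> Jinf" and "lower_adj h z \<in> frm_circ A u v" for z u v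
  proof -
    have "z \<le> mult B (h u) (h v)"
      using that(2) by (simp add: frm_circ_def adj h_mult)
    then obtain x y where "x \<in> Jinf" "y \<in> Jinf" "x \<le> h u" "y \<le> h v" "z \<le> mult B x y"
      using Jinf_le_multD[OF assms(2) z] by blast
    then show ?thesis
      using z by (auto simp: frm_le_def frm_circ_def adj)
  qed
  show ?thesis
    unfolding frame_morphism_def
  proof (intro conjI)
    show "lower_adj h ` Jinf \<subseteq> Jinf"
      using Jinf_closed by blast
    show "\<forall>x\<in>Jinf. \<forall>y\<in>Jinf. frm_le x y \<longrightarrow> frm_le (lower_adj h x) (lower_adj h y)"
      by (simp add: frm_le_def lower_adj_mono[OF h_Inf])
    show "\<forall>x\<in>Jinf. \<forall>y\<in>Jinf. \<forall>z\<in>Jinf. z \<in> frm_circ B x y \<longrightarrow>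
            lower_adj h z \<in> frm_circ A (lower_adj h x) (lower_adj h y)"
      using lower_adj_mult[where h = h, OF h_Inf infB h_mult] by (simp add: frm_circ_def Jinf_closed)
    show "\<forall>z\<in>Jinf. \<forall>u\<in>Jinf. \<forall>v\<in>Jinf. lower_adj h z \<in> frm_circ A u v \<longrightarrow>
            (\<exists>x\<in>Jinf. \<exists>y\<in>Jinf. frm_le u (lower_adj h x) \<and> frm_le v (lower_adj h y)
               \<and> z \<in> frm_circ B x y)"
      using decompose by blast
    show "\<forall>x\<in>Jinf. lower_adj h (frm_sim B x) = frm_sim A (lower_adj h x)"
      unfolding frm_sim_def
      using lower_adj_kappa_negation[where h = h and negA' = "sim A" and negA = "mns A"
          and negB' = "sim B" and negB = "mns B", OF h_Inf h_Sup distribA perfectA distribB perfectB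
          InFL_sim_le_iff[OF infA] InFL_sim_le_iff[OF infB] h_mns] by blast
    show "\<forall>x\<in>Jinf. lower_adj h (frm_mns B x) = frm_mns A (lower_adj h x)"
      unfolding frm_mns_def
      using lower_adj_kappa_negation[where h = h and negA' = "mns A" and negA = "sim A"
          and negB' = "mns B" and negB = "sim B", OF h_Inf h_Sup distribA perfectA distribB perfectB
          InFL_mns_le_iff[OF infA] InFL_mns_le_iff[OF infB] h_sim] by blast
    show "frm_I B = {x \<in> Jinf. lower_adj h x \<in> frm_I A}"
      unfolding frm_I_def using Jinf_closed by (auto simp: adj h_one)
  qed
qed

theorem mainTheorem15:
  fixes A :: "('a::complete_lattice) infl_ops" and B :: "('b::complete_lattice) infl_ops"
    and h :: "'a \<Rightarrow> 'b"
  assumes "cp_DInFL A" and "cp_DInFL B" and "complete_hom A B h"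
  shows "frame_morphism (Jinf :: 'b set) (frm_I B) frm_le (frm_circ B) (frm_sim B) (frm_mns B)
                        (Jinf :: 'a set) (frm_I A) frm_le (frm_circ A) (frm_sim A) (frm_mns A)
                        (lower_adj h)
       \<and> (inj h \<longrightarrow> lower_adj h ` (Jinf :: 'b set) = (Jinf :: 'a set))
       \<and> (surj h \<longrightarrow> (\<forall>x\<in>(Jinf :: 'b set). \<forall>y\<in>(Jinf :: 'b set).
                         frm_le x y \<longleftrightarrow> frm_le (lower_adj h x) (lower_adj h y)))"
proof -
  have h_Inf: "\<And>S. h (Inf S) = Inf (h ` S)" and h_Sup: "\<And>S. h (Sup S) = Sup (h ` S)"
    using assms(3) unfolding complete_hom_def by blast+
  have distribB: "\<And>x y z::'b. inf x (sup y z) = sup (inf x y) (inf x z)"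
    and perfectB: "perfect TYPE('b)"
    using assms(2) unfolding cp_DInFL_def DInFL_def by blast+
  show ?thesis
    using complete_hom_lower_adj_frame_morphism[OF assms]
      inj_imp_lower_adj_image_Jinf[OF h_Inf _ h_Sup distribB perfectB]
      surj_imp_lower_adj_le_iff[OF h_Inf]
    unfolding frm_le_def by blast
qed

end
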